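(* Let $(\rho_n)$ be LLN-appropriate with constants $(c_i)_{i\ge1}$, and let $\sigma\in S_\infty$ be a permutation whose cycles of length $\ge2$ have lengths given by the partition $\lambda$. Then $$\lim_{n\to\infty}n^{|\sigma|/2}M_{\rho_n}(\sigma)=\prod_{i\in\lambda}c_i,$$ the product over the parts of $\lambda$ with multiplicity.
   Context: $\rho_n$ is a probability measure on the set $\mathbb{Y}_n$ of partitions of $n$; $M_\rho(\sigma)=\sum_{\lambda\in\mathbb{Y}_n}\rho(\lambda)\chi_\lambda(\tau)/\dim\lambda$ if $\sigma\in S_\infty$ is conjugate to some $\tau\in S_n$, else $0$; $|\sigma|$ is the minimal number of transpositions with product $\sigma$. Young generating function $A_\rho=\sum_{\vec i}M_\rho(\sigma_{\vec i})\prod_{k\ge1}n^{i_k(k-1)/2}x_k^{i_k}/i_k!$ over finitely supported $\vec i\in\mathbb{Z}_{\ge0}^{\mathbb{N}}$, $\sigma_{\vec i}$ any permutation with $i_k$ cycles of length $k$ for each $k\ge2$. LLN-appropriate with constants $c_i$: $\lim_n\partial_i\ln A_{\rho_n}|_{\vec x=0}=c_i$ for all $i$, and all formal mixed derivatives of order $\ge2$ of $\ln A_{\rho_n}$ at $\vec x=0$ tend to $0$. *)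

theory Defs
  imports "HOL-Probability.Probability" "HOL-Library.Poly_Mapping"
    "HOL-Combinatorics.Transposition" "HOL-Combinatorics.Permutations"
begin

definition partitions :: "nat \<Rightarrow> nat list set" where
  "partitions n = {l. sorted_wrt (\<ge>) l \<and> (\<forall>x\<in>set l. 0 < x) \<and> sum_list l = n}"

definition diagram :: "nat list \<Rightarrow> (nat \<times> nat) set" where
  "diagram l = {(i, j). i < length l \<and> j < l ! i}"

definition cell_adj :: "nat \<times> nat \<Rightarrow> nat \<times> nat \<Rightarrow> bool" where
  "cell_adj a b \<longleftrightarrow>
     (fst a = fst b \<and> (snd a = Suc (snd b) \<or> snd b = Suc (snd a))) \<or>
     (snd a = snd b \<and> (fst a = Suc (fst b) \<or> fst b = Suc (fst a)))"

definition edge_connected :: "(nat \<times> nat) set \<Rightarrow> bool" where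
  "edge_connected S \<longleftrightarrow>
     (\<forall>a\<in>S. \<forall>b\<in>S. (a, b) \<in> {(c, d). c \<in> S \<and> d \<in> S \<and> cell_adj c d}\<^sup>*)"

definition border_strip :: "nat list \<Rightarrow> nat list \<Rightarrow> bool" where
  "border_strip lam nu \<longleftrightarrow>
     diagram nu \<subseteq> diagram lam \<and>
     (let S = diagram lam - diagram nu in
        S \<noteq> {} \<and> edge_connected S \<and>
        \<not> (\<exists>i j. {(i, j), (Suc i, j), (i, Suc j), (Suc i, Suc j)} \<subseteq> S))"

definition strip_height :: "nat list \<Rightarrow> nat list \<Rightarrow> nat" where
  "strip_height lam nu = card (fst ` (diagram lam - diagram nu)) - 1"

text \<open>Irreducible character chi_lam evaluated on cycle type mu (Murnaghan-Nakayama rule).\<close>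
primrec mn_char :: "nat list \<Rightarrow> nat list \<Rightarrow> int" where
  "mn_char lam [] = (if lam = [] then 1 else 0)"
| "mn_char lam (k # mu) =
     (\<Sum>nu\<in>{nu. k \<le> sum_list lam \<and> nu \<in> partitions (sum_list lam - k) \<and> border_strip lam nu}.
        (-1) ^ strip_height lam nu * mn_char nu mu)"

definition dimY :: "nat list \<Rightarrow> int" where
  "dimY lam = mn_char lam (replicate (sum_list lam) 1)"

definition finitary :: "(nat \<Rightarrow> nat) \<Rightarrow> bool" where
  "finitary \<sigma> \<longleftrightarrow> bij \<sigma> \<and> finite {x. \<sigma> x \<noteq> x}"

definition porbit :: "(nat \<Rightarrow> nat) \<Rightarrow> nat \<Rightarrow> nat set" where
  "porbit \<sigma> x = range (\<lambda>k. (\<sigma> ^^ k) x)"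

definition cycle_lengths :: "(nat \<Rightarrow> nat) \<Rightarrow> nat multiset" where
  "cycle_lengths \<sigma> = image_mset card (mset_set (porbit \<sigma> ` {x. \<sigma> x \<noteq> x}))"

definition full_ctype :: "nat \<Rightarrow> (nat \<Rightarrow> nat) \<Rightarrow> nat list" where
  "full_ctype n \<tau> = rev (sorted_list_of_multiset
      (image_mset card (mset_set (porbit \<tau> ` {0..<n}))))"

definition transp_length :: "(nat \<Rightarrow> nat) \<Rightarrow> nat" where
  "transp_length \<sigma> = (LEAST k. \<exists>ts. length ts = k \<and> (\<forall>(a, b)\<in>set ts. a \<noteq> b) \<and>
      \<sigma> = foldr (\<lambda>(a, b) f. Transposition.transpose a b \<circ> f) ts id)"

definition conj_to_Sn :: "nat \<Rightarrow> (nat \<Rightarrow> nat) \<Rightarrow> (nat \<Rightarrow> nat) \<Rightarrow> bool" where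
  "conj_to_Sn n \<sigma> \<tau> \<longleftrightarrow> \<tau> permutes {0..<n} \<and> (\<exists>g. finitary g \<and> \<sigma> = g \<circ> \<tau> \<circ> inv g)"

definition M :: "nat list pmf \<Rightarrow> nat \<Rightarrow> (nat \<Rightarrow> nat) \<Rightarrow> real" where
  "M \<rho> n \<sigma> = (if \<exists>\<tau>. conj_to_Sn n \<sigma> \<tau> then
      (let \<tau> = (SOME \<tau>. conj_to_Sn n \<sigma> \<tau>) in
        (\<Sum>lam\<in>partitions n. pmf \<rho> lam * real_of_int (mn_char lam (full_ctype n \<tau>))
                               / real_of_int (dimY lam)))
     else 0)"

text \<open>Coefficients indexed by finitely supported exponent vectors; index 0 is unused.\<close>
type_synonym mfps = "(nat \<Rightarrow>\<^sub>0 nat) \<Rightarrow> real"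

definition mmult :: "mfps \<Rightarrow> mfps \<Rightarrow> mfps" where
  "mmult F G = (\<lambda>\<alpha>. \<Sum>(\<beta>, \<gamma>)\<in>{(\<beta>, \<gamma>). \<beta> + \<gamma> = \<alpha>}. F \<beta> * G \<gamma>)"

primrec mpow :: "mfps \<Rightarrow> nat \<Rightarrow> mfps" where
  "mpow F 0 = (\<lambda>\<alpha>. if \<alpha> = 0 then 1 else 0)"
| "mpow F (Suc m) = mmult F (mpow F m)"

text \<open>Formal logarithm: ln F = ln F(0) + log(1 + G), G = F/F(0) - 1.\<close>
definition mlog :: "mfps \<Rightarrow> mfps" where
  "mlog F = (\<lambda>\<alpha>. if \<alpha> = 0 then ln (F 0) else
      (let G = (\<lambda>\<beta>. if \<beta> = 0 then 0 else F \<beta> / F 0) in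
        suminf (\<lambda>m. (-1) ^ m / real (m + 1) * mpow G (m + 1) \<alpha>)))"

definition mderiv :: "nat \<Rightarrow> mfps \<Rightarrow> mfps" where
  "mderiv k F = (\<lambda>\<alpha>. real (Poly_Mapping.lookup \<alpha> k + 1) * F (\<alpha> + Poly_Mapping.single k 1))"

definition mderivs :: "nat list \<Rightarrow> mfps \<Rightarrow> mfps" where
  "mderivs ks F = fold mderiv ks F"

definition perm_of_type :: "(nat \<Rightarrow>\<^sub>0 nat) \<Rightarrow> (nat \<Rightarrow> nat)" where
  "perm_of_type \<alpha> = (SOME \<sigma>. finitary \<sigma> \<and> (\<forall>k\<ge>2. count (cycle_lengths \<sigma>) k = Poly_Mapping.lookup \<alpha> k))"

definition young_gf :: "nat list pmf \<Rightarrow> nat \<Rightarrow> mfps" where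
  "young_gf \<rho> n = (\<lambda>\<alpha>. if Poly_Mapping.lookup \<alpha> 0 \<noteq> 0 then 0 else
      M \<rho> n (perm_of_type \<alpha>) *
      (\<Prod>k\<in>Poly_Mapping.keys \<alpha>. sqrt (real n) ^ (Poly_Mapping.lookup \<alpha> k * (k - 1)) / fact (Poly_Mapping.lookup \<alpha> k)))"

definition LLN_appropriate :: "(nat \<Rightarrow> nat list pmf) \<Rightarrow> (nat \<Rightarrow> real) \<Rightarrow> bool" where
  "LLN_appropriate \<rho> c \<longleftrightarrow>
     (\<forall>i\<ge>1. (\<lambda>n. mderivs [i] (mlog (young_gf (\<rho> n) n)) 0) \<longlonglongrightarrow> c i) \<and>
     (\<forall>ks. 2 \<le> length ks \<and> (\<forall>k\<in>set ks. 1 \<le> k) \<longrightarrow>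
        (\<lambda>n. mderivs ks (mlog (young_gf (\<rho> n) n)) 0) \<longlonglongrightarrow> 0)"

end

theory Submission
  imports Defs "HOL-Combinatorics.Orbits"
begin

(* Write F_n for the Young generating function of \<rho>_n. Its coefficient at the monomial
   attached to \<sigma> is n^(|\<sigma>|/2) M(\<sigma>) divided by the factorials of the multiplicities of
   the cycle lengths, because |\<sigma>| is the sum of l - 1 over the cycle lengths l of \<sigma>.
   All dimensions being positive, M(id) = 1, so F_n has constant term 1 and the Euler operator
   E = \<Sum>_k x_k d/dx_k satisfies E F_n = F_n * E (ln F_n). Comparing coefficients of degree d
   expresses d times a coefficient of F_n through coefficients of F_n of lower degree and
   coefficients of E (ln F_n), which by LLN-appropriateness tend to those of the linear series
   L = \<Sum>_k c_k x_k. Induction on the degree shows that F_n tends coefficientwise to exp L,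
   whose coefficient at the monomial of \<sigma> is the product of the c_i over the same factorials. *)

section \<open>Orbits of finitary permutations\<close>

lemma finitary_iff_permutation: "finitary f \<longleftrightarrow> permutation f"
  by (simp add: finitary_def permutation)

lemma porbit_eq_orbit: "permutation f \<Longrightarrow> porbit f x = orbit f x"
  by (auto simp: porbit_def orbit_altdef_permutation)

lemma self_in_porbit [simp]: "x \<in> porbit f x"
  unfolding porbit_def by (metis funpow_0 rangeI)

lemma porbit_closed:
  assumes "z \<in> porbit f x"
  shows "f z \<in> porbit f x"
proof -
  obtain k where "z = (f ^^ k) x" using assms by (auto simp: porbit_def)
  then have "f z = (f ^^ Suc k) x" by simp
  then show ?thesis unfolding porbit_def by (metis rangeI)
qed

lemma porbit_eq_if_mem:
  assumes "permutation f" "y \<in> porbit f x"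
  shows "porbit f y = porbit f x"
proof -
  have y: "y \<in> orbit f x" using assms by (simp add: porbit_eq_orbit)
  then have "x \<in> orbit f y"
    using orbit_swap[OF permutation_self_in_orbit[OF assms(1)]] by blast
  then have "orbit f y = orbit f x" using y by (auto intro: orbit_trans)
  then show ?thesis using assms(1) by (simp add: porbit_eq_orbit)
qed

lemma finite_porbit: "permutation f \<Longrightarrow> finite (porbit f x)"
  by (simp add: porbit_eq_orbit finite_orbit permutation_self_in_orbit)

lemma porbit_fixpoint: "f x = x \<Longrightarrow> porbit f x = {x}"
proof -
  assume "f x = x"
  then have "(f ^^ k) x = x" for k by (induct k) simp_all
  then show ?thesis by (auto simp: porbit_def)
qed

lemma porbit_cong:
  assumes "\<forall>z\<in>porbit g y. f z = g z"
  shows "porbit f y = porbit g y"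
proof -
  have "(f ^^ k) y = (g ^^ k) y" for k
  proof (induct k)
    case (Suc k)
    have "(g ^^ k) y \<in> porbit g y" by (simp add: porbit_def)
    then show ?case using Suc assms by simp
  qed simp
  then show ?thesis by (simp add: porbit_def)
qed

lemma porbit_subset:
  assumes "inj f" "{z. f z \<noteq> z} \<subseteq> U" "x \<in> U"
  shows "porbit f x \<subseteq> U"
proof -
  have "(f ^^ k) x \<in> U" for k
  proof (induct k)
    case (Suc k)
    let ?z = "(f ^^ k) x"
    show ?case
    proof (cases "f ?z = ?z")
      case False
      then have "f (f ?z) \<noteq> f ?z" using assms(1) by (metis injD)
      then show ?thesis using assms(2) by auto
    qed (use Suc in simp)
  qed (simp add: assms)
  then show ?thesis by (auto simp: porbit_def)
qed

lemma Union_porbits: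
  assumes "permutation f" "{z. f z \<noteq> z} \<subseteq> U"
  shows "\<Union> (porbit f ` U) = U"
proof
  have "inj f" using permutation_bijective[OF assms(1)] by (simp add: bij_def)
  then show "\<Union> (porbit f ` U) \<subseteq> U" using porbit_subset[OF _ assms(2)] by blast
qed (use self_in_porbit in blast)

lemma sum_card_porbits:
  assumes "permutation f" "{z. f z \<noteq> z} \<subseteq> U" "finite U"
  shows "(\<Sum>B\<in>porbit f ` U. card B) = card U"
proof -
  have "pairwise disjnt (porbit f ` U)"
    unfolding pairwise_def disjnt_def using porbit_eq_if_mem[OF assms(1)] by blast
  then have "card (\<Union> (porbit f ` U)) = (\<Sum>B\<in>porbit f ` U. card B)"
    by (rule card_Union_disjoint) (auto simp: finite_porbit assms(1))
  then show ?thesis using Union_porbits[OF assms(1,2)] by simp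
qed

lemma two_le_card_porbit:
  assumes "permutation f" "f x \<noteq> x"
  shows "2 \<le> card (porbit f x)"
proof -
  have "{x, f x} \<subseteq> porbit f x" using porbit_closed[OF self_in_porbit] by simp
  then have "card {x, f x} \<le> card (porbit f x)"
    using finite_porbit[OF assms(1)] by (rule card_mono[rotated])
  then show ?thesis using assms(2) by simp
qed

lemma cycle_lengths_ge_2: "permutation f \<Longrightarrow> i \<in># cycle_lengths f \<Longrightarrow> 2 \<le> i"
  unfolding cycle_lengths_def by (auto simp: permutation two_le_card_porbit)

lemma sum_mset_cycle_lengths:
  assumes "permutation f"
  shows "sum_mset (cycle_lengths f) = card {z. f z \<noteq> z}"
proof -
  have "sum_mset (cycle_lengths f) = (\<Sum>B\<in>porbit f ` {z. f z \<noteq> z}. card B)"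
    unfolding cycle_lengths_def by (simp add: sum_unfold_sum_mset)
  also have "\<dots> = card {z. f z \<noteq> z}"
    using assms by (intro sum_card_porbits) (auto simp: permutation)
  finally show ?thesis .
qed

lemma cycle_lengths_id: "cycle_lengths id = {#}"
  unfolding cycle_lengths_def by simp

lemma cycle_lengths_eq_empty_imp_id:
  assumes "finitary f" "cycle_lengths f = {#}"
  shows "f = id"
proof -
  have "finite {z. f z \<noteq> z}" using assms(1) by (simp add: finitary_def)
  then have "porbit f ` {z. f z \<noteq> z} = {}"
    using assms(2) unfolding cycle_lengths_def by (simp add: mset_set_empty_iff)
  then show ?thesis by auto
qed

section \<open>The transposition length\<close>

definition cycle_defect :: "(nat \<Rightarrow> nat) \<Rightarrow> nat" where
  "cycle_defect f = (\<Sum>i\<in>#cycle_lengths f. i - 1)"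

lemma cycle_defect_eq_card_porbits:
  assumes f: "permutation f" and U: "{z. f z \<noteq> z} \<subseteq> U" "finite U"
  shows "cycle_defect f = card U - card (porbit f ` U)"
proof -
  have nonempty: "1 \<le> card B" if B: "B \<in> porbit f ` U" for B
  proof -
    obtain u where "B = porbit f u" using B by blast
    then have "finite B" "u \<in> B" using finite_porbit[OF f] by auto
    then show ?thesis by (metis One_nat_def Suc_leI card_gt_0_iff empty_iff)
  qed
  have "cycle_defect f = (\<Sum>B\<in>porbit f ` {z. f z \<noteq> z}. card B - 1)"
    unfolding cycle_defect_def cycle_lengths_def sum_unfold_sum_mset[of "\<lambda>B. card B - 1"]
    by (simp add: image_mset.compositionality o_def)
  also have "\<dots> = (\<Sum>B\<in>porbit f ` U. card B - 1)"
  proof (rule sum.mono_neutral_left)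
    show "\<forall>B\<in>porbit f ` U - porbit f ` {z. f z \<noteq> z}. card B - 1 = 0"
    proof
      fix B assume "B \<in> porbit f ` U - porbit f ` {z. f z \<noteq> z}"
      then obtain u where "B = porbit f u" "f u = u" by blast
      then show "card B - 1 = 0" using porbit_fixpoint by simp
    qed
  qed (use U in auto)
  also have "\<dots> = (\<Sum>B\<in>porbit f ` U. card B) - card (porbit f ` U)"
    using nonempty by (simp add: sum_subtractf_nat)
  also have "\<dots> = card U - card (porbit f ` U)"
    using sum_card_porbits[OF f U] by simp
  finally show ?thesis .
qed

lemma porbit_transpose_comp:
  assumes "a \<notin> porbit g y" "b \<notin> porbit g y"
  shows "porbit (Transposition.transpose a b \<circ> g) y = porbit g y"
proof (rule porbit_cong, rule ballI)
  fix z assume "z \<in> porbit g y"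
  then have "g z \<noteq> a" "g z \<noteq> b" using assms porbit_closed by metis+
  then show "(Transposition.transpose a b \<circ> g) z = g z" by (simp add: transpose_apply_other)
qed

lemma card_porbits_transpose_comp_ge:
  assumes g: "permutation g" and U: "{z. g z \<noteq> z} \<subseteq> U" "finite U" and ab: "a \<in> U" "b \<in> U"
  shows "card (porbit g ` U) \<le> card (porbit (Transposition.transpose a b \<circ> g) ` U) + 1"
proof -
  let ?f = "Transposition.transpose a b \<circ> g"
  define Away where "Away = {B\<in>porbit g ` U. a \<notin> B \<and> b \<notin> B}"
  have "Away \<subseteq> porbit ?f ` U - {porbit ?f a}"
  proof
    fix B assume "B \<in> Away"
    then obtain y where y: "y \<in> U" "B = porbit g y" "a \<notin> B" "b \<notin> B"
      unfolding Away_def by blast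
    then have "porbit ?f y = B" using porbit_transpose_comp by metis
    then show "B \<in> porbit ?f ` U - {porbit ?f a}" using y by auto
  qed
  then have "card Away \<le> card (porbit ?f ` U - {porbit ?f a})"
    using U by (intro card_mono) auto
  also have "\<dots> = card (porbit ?f ` U) - 1"
    using U ab by (simp add: card_Diff_singleton)
  finally have Away_le: "card Away \<le> card (porbit ?f ` U) - 1" .
  have "porbit g ` U \<subseteq> Away \<union> {porbit g a, porbit g b}"
  proof
    fix B assume B: "B \<in> porbit g ` U"
    then obtain y where y: "B = porbit g y" by blast
    show "B \<in> Away \<union> {porbit g a, porbit g b}"
    proof (cases "a \<in> B \<or> b \<in> B")
      case True
      then show ?thesis using porbit_eq_if_mem[OF g] y by auto
    qed (use B in \<open>auto simp: Away_def\<close>)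
  qed
  then have "card (porbit g ` U) \<le> card (Away \<union> {porbit g a, porbit g b})"
    using U unfolding Away_def by (intro card_mono) auto
  also have "\<dots> \<le> card Away + 2"
  proof -
    have "card {porbit g a, porbit g b} \<le> 2" by (rule card_insert_le_m1) simp_all
    then show ?thesis using card_Un_le[of Away "{porbit g a, porbit g b}"] by linarith
  qed
  finally have "card (porbit g ` U) \<le> card Away + 2" .
  moreover note Away_le
  moreover have "1 \<le> card (porbit ?f ` U)"
    using U ab by (metis One_nat_def Suc_leI card_gt_0_iff empty_iff finite_imageI imageI)
  ultimately show ?thesis by linarith
qed

text \<open>Composing with the transposition of x and \<sigma> x splits x off its cycle as a fixed point.\<close>
lemma card_porbits_transpose_comp_split:
  assumes \<sigma>: "permutation \<sigma>" and x: "\<sigma> x \<noteq> x"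
  defines "U \<equiv> {z. \<sigma> z \<noteq> z}"
  shows "card (porbit \<sigma> ` U) + 1 \<le> card (porbit (Transposition.transpose x (\<sigma> x) \<circ> \<sigma>) ` U)"
proof -
  let ?y = "\<sigma> x"
  let ?f = "Transposition.transpose x ?y \<circ> \<sigma>"
  have U: "finite U" using \<sigma> unfolding U_def by (simp add: permutation)
  have xU: "x \<in> U" and yU: "?y \<in> U"
    using x permutation_bijective[OF \<sigma>] unfolding U_def by (auto simp: bij_def inj_eq)
  have fx: "porbit ?f x = {x}" by (rule porbit_fixpoint) simp
  have yx: "?y \<in> porbit \<sigma> x" using porbit_closed[OF self_in_porbit] .
  have "porbit ?f x \<noteq> porbit ?f ?y" by (metis fx self_in_porbit singletonD x)
  then have two: "card {porbit ?f x, porbit ?f ?y} = 2" by simp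
  have sub2: "{porbit ?f x, porbit ?f ?y} \<subseteq> porbit ?f ` U" using xU yU by auto
  have "porbit \<sigma> ` U - {porbit \<sigma> x} \<subseteq> porbit ?f ` U - {porbit ?f x, porbit ?f ?y}"
  proof
    fix B assume "B \<in> porbit \<sigma> ` U - {porbit \<sigma> x}"
    then obtain u where u: "u \<in> U" "B = porbit \<sigma> u" "B \<noteq> porbit \<sigma> x" by blast
    have "x \<notin> B" "?y \<notin> B" using porbit_eq_if_mem[OF \<sigma>] u yx by metis+
    then have "porbit ?f u = B" using porbit_transpose_comp u(2) by metis
    moreover have "B \<noteq> porbit ?f x" using fx \<open>x \<notin> B\<close> by auto
    moreover have "B \<noteq> porbit ?f ?y" using \<open>?y \<notin> B\<close> self_in_porbit by auto
    ultimately show "B \<in> porbit ?f ` U - {porbit ?f x, porbit ?f ?y}" using u by auto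
  qed
  then have "card (porbit \<sigma> ` U - {porbit \<sigma> x}) \<le> card (porbit ?f ` U - {porbit ?f x, porbit ?f ?y})"
    using U by (intro card_mono) auto
  also have "\<dots> = card (porbit ?f ` U) - 2"
    using U sub2 two by (simp add: card_Diff_subset)
  finally have "card (porbit \<sigma> ` U - {porbit \<sigma> x}) \<le> card (porbit ?f ` U) - 2" .
  moreover have "card (porbit \<sigma> ` U - {porbit \<sigma> x}) = card (porbit \<sigma> ` U) - 1"
    using U xU by (simp add: card_Diff_singleton)
  moreover have "1 \<le> card (porbit \<sigma> ` U)"
    using U xU by (metis One_nat_def Suc_leI card_gt_0_iff empty_iff finite_imageI imageI)
  moreover have "2 \<le> card (porbit ?f ` U)"
    using card_mono[OF _ sub2] two U by simp
  ultimately show ?thesis by linarith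
qed

lemma supp_transpose_comp_subset:
  assumes \<sigma>: "permutation \<sigma>" and x: "\<sigma> x \<noteq> x"
  shows "{z. (Transposition.transpose x (\<sigma> x) \<circ> \<sigma>) z \<noteq> z} \<subseteq> {z. \<sigma> z \<noteq> z} - {x}"
proof
  fix z assume z: "z \<in> {z. (Transposition.transpose x (\<sigma> x) \<circ> \<sigma>) z \<noteq> z}"
  then have "z \<noteq> x" by auto
  moreover have "\<sigma> z \<noteq> z"
  proof
    assume fix_z: "\<sigma> z = z"
    moreover have "inj \<sigma>" using permutation_bijective[OF \<sigma>] by (simp add: bij_def)
    ultimately have "z \<noteq> \<sigma> x" using x by (auto simp: inj_eq)
    then show False using z fix_z \<open>z \<noteq> x\<close> by (simp add: transpose_apply_other)
  qed
  ultimately show "z \<in> {z. \<sigma> z \<noteq> z} - {x}" by simp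
qed

lemma card_le_card_porbits_apply_transps:
  assumes "\<forall>(a, b)\<in>set ts. a \<in> U \<and> b \<in> U" "finite U"
  shows "card U \<le> card (porbit (apply_transps ts) ` U) + length ts"
  using assms(1)
proof (induct ts)
  case Nil
  have "porbit (apply_transps []) ` U = (\<lambda>x. {x}) ` U" using porbit_fixpoint[of id] by auto
  moreover have "card ((\<lambda>x. {x}) ` U) = card U" by (rule card_image) (auto simp: inj_on_def)
  ultimately show ?case by (metis add_0_right le_refl list.size(3))
next
  case (Cons p ts)
  obtain a b where p: "p = (a, b)" by (cases p)
  let ?g = "apply_transps ts"
  have "?g permutes U" using Cons.prems by (intro permutes_apply_transps) auto
  then have "{z. ?g z \<noteq> z} \<subseteq> U" using permutes_not_in by fastforce
  then have "card (porbit ?g ` U) \<le> card (porbit (Transposition.transpose a b \<circ> ?g) ` U) + 1"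
    using card_porbits_transpose_comp_ge[OF permutation_apply_transps _ assms(2)] Cons.prems p
    by simp
  moreover have "card U \<le> card (porbit ?g ` U) + length ts" using Cons by auto
  moreover have "apply_transps (p # ts) = Transposition.transpose a b \<circ> ?g" using p by simp
  ultimately show ?case by (simp only: length_Cons)
qed

lemma cycle_defect_le_length: "cycle_defect (apply_transps ts) \<le> length ts"
proof -
  define U where "U = fst ` set ts \<union> snd ` set ts"
  have U: "finite U" unfolding U_def by simp
  have ts: "\<forall>(a, b)\<in>set ts. a \<in> U \<and> b \<in> U" unfolding U_def by force
  then have "apply_transps ts permutes U" by (simp add: permutes_apply_transps)
  then have "{z. apply_transps ts z \<noteq> z} \<subseteq> U" using permutes_not_in by fastforce
  then show ?thesis
    using cycle_defect_eq_card_porbits[OF _ _ U] card_le_card_porbits_apply_transps[OF ts U]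
    by simp
qed

lemma ex_transps_length_le_cycle_defect:
  "permutation \<sigma> \<Longrightarrow>
    \<exists>ts. (\<forall>(a, b)\<in>set ts. a \<noteq> b) \<and> \<sigma> = apply_transps ts \<and> length ts \<le> cycle_defect \<sigma>"
proof (induct "card {z. \<sigma> z \<noteq> z}" arbitrary: \<sigma> rule: less_induct)
  case less
  show ?case
  proof (cases "\<sigma> = id")
    case False
    then obtain x where x: "\<sigma> x \<noteq> x" by (auto simp: fun_eq_iff)
    let ?t = "Transposition.transpose x (\<sigma> x)"
    let ?f = "?t \<circ> \<sigma>"
    define U where "U = {z. \<sigma> z \<noteq> z}"
    have U: "finite U" using less.prems unfolding U_def by (simp add: permutation)
    have f: "permutation ?f" using less.prems by (simp add: permutation_compose permutation_swap_id)
    have supp_f: "{z. ?f z \<noteq> z} \<subseteq> U - {x}"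
      using supp_transpose_comp_subset[OF less.prems x] U_def by simp
    then have "card {z. ?f z \<noteq> z} \<le> card (U - {x})" using U by (intro card_mono) auto
    also have "\<dots> < card U" using U x unfolding U_def by (intro card_Diff1_less) auto
    finally have "card {z. ?f z \<noteq> z} < card U" .
    then obtain ts where ts: "\<forall>(a, b)\<in>set ts. a \<noteq> b" "?f = apply_transps ts"
        "length ts \<le> cycle_defect ?f"
      using less.hyps[OF _ f] U_def by blast
    have "\<sigma> = ?t \<circ> ?f" by (metis comp_assoc id_comp transpose_comp_involutory)
    then have "\<sigma> = apply_transps ((x, \<sigma> x) # ts)" using ts by simp
    moreover have "length ((x, \<sigma> x) # ts) \<le> cycle_defect \<sigma>"
    proof -
      have "cycle_defect ?f = card U - card (porbit ?f ` U)"
        using cycle_defect_eq_card_porbits[OF f _ U] supp_f by blast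
      moreover have "cycle_defect \<sigma> = card U - card (porbit \<sigma> ` U)"
        using cycle_defect_eq_card_porbits[OF less.prems _ U] U_def by simp
      moreover have "card (porbit \<sigma> ` U) + 1 \<le> card (porbit ?f ` U)"
        using card_porbits_transpose_comp_split[OF less.prems x] U_def by simp
      moreover have "card (porbit ?f ` U) \<le> card U" using U by (simp add: card_image_le)
      ultimately show ?thesis using ts(3) by simp
    qed
    moreover have "\<forall>(a, b)\<in>set ((x, \<sigma> x) # ts). a \<noteq> b" using ts(1) x by auto
    ultimately show ?thesis by blast
  qed (intro exI[of _ "[]"], simp)
qed

lemma transp_length_eq_cycle_defect:
  assumes "permutation \<sigma>"
  shows "transp_length \<sigma> = cycle_defect \<sigma>"
proof -
  have foldr_eq: "foldr (\<lambda>(a, b) f. Transposition.transpose a b \<circ> f) ts id = apply_transps ts"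
    for ts :: "(nat \<times> nat) list"
    by (induct ts) (auto simp: case_prod_unfold)
  let ?P = "\<lambda>k. \<exists>ts. length ts = k \<and> (\<forall>(a, b)\<in>set ts. a \<noteq> b) \<and>
      \<sigma> = foldr (\<lambda>(a, b) f. Transposition.transpose a b \<circ> f) ts id"
  obtain ts where ts: "\<forall>(a, b)\<in>set ts. a \<noteq> b" "\<sigma> = apply_transps ts" "length ts \<le> cycle_defect \<sigma>"
    using ex_transps_length_le_cycle_defect[OF assms] by blast
  then have P: "?P (length ts)" by (auto simp: foldr_eq)
  then have "(LEAST k. ?P k) \<le> cycle_defect \<sigma>" using ts(3) Least_le[of ?P] by fastforce
  moreover obtain ts' where "length ts' = (LEAST k. ?P k)" "\<sigma> = apply_transps ts'"
    using LeastI[of ?P, OF P] by (auto simp: foldr_eq)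
  then have "cycle_defect \<sigma> \<le> (LEAST k. ?P k)" using cycle_defect_le_length by metis
  ultimately show ?thesis unfolding transp_length_def by simp
qed

section \<open>M depends only on the cycle type\<close>

lemma funpow_conj:
  assumes "bij g"
  shows "(g \<circ> \<tau> \<circ> inv g) ^^ k = g \<circ> \<tau> ^^ k \<circ> inv g"
proof (induct k)
  case 0
  then show ?case using assms by (simp add: fun_eq_iff bij_is_surj surj_f_inv_f)
next
  case (Suc k)
  have "(g \<circ> \<tau> \<circ> inv g) ^^ Suc k = (g \<circ> \<tau> \<circ> inv g) \<circ> (g \<circ> \<tau> ^^ k \<circ> inv g)"
    by (simp only: funpow.simps(2) Suc)
  also have "\<dots> = g \<circ> \<tau> \<circ> (inv g \<circ> g) \<circ> \<tau> ^^ k \<circ> inv g" by (simp add: o_assoc)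
  also have "\<dots> = g \<circ> \<tau> ^^ Suc k \<circ> inv g"
    using assms by (simp add: o_assoc funpow_Suc_right bij_is_inj)
  finally show ?case .
qed

lemma porbit_conj:
  assumes "bij g"
  shows "porbit (g \<circ> \<tau> \<circ> inv g) (g x) = g ` porbit \<tau> x"
proof -
  have "((g \<circ> \<tau> \<circ> inv g) ^^ k) (g x) = g ((\<tau> ^^ k) x)" for k
    using assms by (simp add: funpow_conj bij_is_inj)
  then show ?thesis unfolding porbit_def by (auto simp: image_image)
qed

lemma supp_conj:
  assumes "bij g"
  shows "{z. (g \<circ> \<tau> \<circ> inv g) z \<noteq> z} = g ` {z. \<tau> z \<noteq> z}"
proof -
  have moved: "(g \<circ> \<tau> \<circ> inv g) (g x) \<noteq> g x \<longleftrightarrow> \<tau> x \<noteq> x" for x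
    using assms by (simp add: bij_is_inj inj_eq)
  have "y = g (inv g y)" for y using assms by (simp add: bij_is_surj surj_f_inv_f)
  then have "y \<in> g ` {z. \<tau> z \<noteq> z}" if "(g \<circ> \<tau> \<circ> inv g) y \<noteq> y" for y
    using that moved[of "inv g y"] by (metis (mono_tags, lifting) image_eqI mem_Collect_eq)
  then show ?thesis using moved by auto
qed

lemma cycle_lengths_conj:
  assumes "bij g"
  shows "cycle_lengths (g \<circ> \<tau> \<circ> inv g) = cycle_lengths \<tau>"
proof -
  let ?X = "porbit \<tau> ` {z. \<tau> z \<noteq> z}"
  have inj: "inj g" using assms by (simp add: bij_is_inj)
  have "porbit (g \<circ> \<tau> \<circ> inv g) ` {z. (g \<circ> \<tau> \<circ> inv g) z \<noteq> z} = (\<lambda>B. g ` B) ` ?X"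
    unfolding supp_conj[OF assms] using porbit_conj[OF assms] by (auto simp: image_image)
  moreover have "inj_on (\<lambda>B. g ` B) ?X" using inj by (simp add: inj_on_def inj_image_eq_iff)
  ultimately have "mset_set (porbit (g \<circ> \<tau> \<circ> inv g) ` {z. (g \<circ> \<tau> \<circ> inv g) z \<noteq> z}) =
      image_mset (\<lambda>B. g ` B) (mset_set ?X)"
    by (simp add: image_mset_mset_set)
  moreover have "card (g ` B) = card B" for B
    using inj by (metis card_image inj_on_subset subset_UNIV)
  ultimately show ?thesis unfolding cycle_lengths_def
    by (simp add: image_mset.compositionality o_def)
qed

definition cycle_type_list :: "nat \<Rightarrow> nat multiset \<Rightarrow> nat list" where
  "cycle_type_list n lm = rev (sorted_list_of_multiset (lm + replicate_mset (n - sum_mset lm) 1))"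

lemma full_ctype_eq_cycle_type_list:
  assumes "\<tau> permutes {0..<n}"
  shows "full_ctype n \<tau> = cycle_type_list n (cycle_lengths \<tau>)"
proof -
  have \<tau>: "permutation \<tau>" using assms permutes_imp_permutation by blast
  let ?S = "{z. \<tau> z \<noteq> z}"
  let ?F = "{0..<n} - ?S"
  have S: "?S \<subseteq> {0..<n}" using assms permutes_not_in by fastforce
  have "porbit \<tau> ` {0..<n} = porbit \<tau> ` ?S \<union> porbit \<tau> ` ?F" using S by auto
  moreover have "porbit \<tau> ` ?F = (\<lambda>x. {x}) ` ?F" using porbit_fixpoint by auto
  ultimately have split: "porbit \<tau> ` {0..<n} = porbit \<tau> ` ?S \<union> (\<lambda>x. {x}) ` ?F" by simp
  have disj: "porbit \<tau> ` ?S \<inter> (\<lambda>x. {x}) ` ?F = {}"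
  proof (rule ccontr)
    assume "porbit \<tau> ` ?S \<inter> (\<lambda>x. {x}) ` ?F \<noteq> {}"
    then obtain s f where "s \<in> ?S" "f \<in> ?F" "porbit \<tau> s = {f}" by blast
    then show False using self_in_porbit[of s \<tau>] by auto
  qed
  have "finite ?S" using \<tau> by (simp add: permutation)
  then have "image_mset card (mset_set (porbit \<tau> ` {0..<n})) =
      cycle_lengths \<tau> + image_mset card (mset_set ((\<lambda>x. {x}) ` ?F))"
    unfolding split cycle_lengths_def using disj by (simp add: mset_set_Union)
  also have "image_mset card (mset_set ((\<lambda>x. {x}) ` ?F)) = replicate_mset (card ?F) 1"
  proof -
    have "image_mset card (mset_set ((\<lambda>x. {x}) ` ?F)) = image_mset (\<lambda>_. 1) (mset_set ((\<lambda>x. {x}) ` ?F))"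
      by (rule image_mset_cong) auto
    moreover have "card ((\<lambda>x. {x}) ` ?F) = card ?F" by (rule card_image) (auto simp: inj_on_def)
    ultimately show ?thesis by (simp add: image_mset_const_eq)
  qed
  also have "card ?F = n - sum_mset (cycle_lengths \<tau>)"
    using sum_mset_cycle_lengths[OF \<tau>] S by (simp add: card_Diff_subset finite_subset)
  finally show ?thesis unfolding full_ctype_def cycle_type_list_def by simp
qed

lemma full_ctype_conj_to_Sn:
  assumes "conj_to_Sn n \<sigma> \<tau>"
  shows "full_ctype n \<tau> = cycle_type_list n (cycle_lengths \<sigma>)"
proof -
  obtain g where "finitary g" "\<sigma> = g \<circ> \<tau> \<circ> inv g" and "\<tau> permutes {0..<n}"
    using assms unfolding conj_to_Sn_def by blast
  then show ?thesis
    by (simp add: finitary_def full_ctype_eq_cycle_type_list cycle_lengths_conj)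
qed

definition M_type :: "nat list pmf \<Rightarrow> nat \<Rightarrow> nat multiset \<Rightarrow> real" where
  "M_type \<rho> n lm = (\<Sum>lam\<in>partitions n. pmf \<rho> lam * real_of_int (mn_char lam (cycle_type_list n lm))
                               / real_of_int (dimY lam))"

lemma M_eq_M_type:
  assumes "\<exists>\<tau>. conj_to_Sn n \<sigma> \<tau>"
  shows "M \<rho> n \<sigma> = M_type \<rho> n (cycle_lengths \<sigma>)"
proof -
  have "conj_to_Sn n \<sigma> (SOME \<tau>. conj_to_Sn n \<sigma> \<tau>)" using assms by (rule someI_ex)
  then show ?thesis unfolding M_def M_type_def using assms full_ctype_conj_to_Sn by (simp add: Let_def)
qed

lemma conj_to_Sn_self:
  assumes "finitary \<sigma>" "\<forall>z. \<sigma> z \<noteq> z \<longrightarrow> z < n"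
  shows "conj_to_Sn n \<sigma> \<sigma>"
proof -
  have "\<sigma> permutes {0..<n}"
    unfolding permutes_def using assms by (auto simp: finitary_def bij_iff)
  moreover have "finitary id" by (simp add: finitary_def)
  ultimately show ?thesis unfolding conj_to_Sn_def by (intro conjI exI[of _ id]) auto
qed

lemma eventually_M_eq_M_type:
  assumes "finitary \<sigma>"
  shows "\<forall>\<^sub>F n in sequentially. \<forall>\<rho>. M \<rho> n \<sigma> = M_type \<rho> n (cycle_lengths \<sigma>)"
proof -
  have fin: "finite {z. \<sigma> z \<noteq> z}" using assms by (simp add: finitary_def)
  have "\<forall>z. \<sigma> z \<noteq> z \<longrightarrow> z < n" if "Suc (Max (insert 0 {z. \<sigma> z \<noteq> z})) \<le> n" for n
  proof (intro allI impI)
    fix z assume "\<sigma> z \<noteq> z"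
    then have "z \<le> Max (insert 0 {z. \<sigma> z \<noteq> z})" using fin by (intro Max_ge) auto
    then show "z < n" using that by simp
  qed
  then show ?thesis
    unfolding eventually_sequentially using M_eq_M_type conj_to_Sn_self[OF assms] by blast
qed

section \<open>The Young generating function has constant term 1\<close>

lemma partitions_bound:
  assumes "l \<in> partitions m"
  shows "set l \<subseteq> {1..m}" "length l \<le> m"
proof -
  have pos: "\<forall>x\<in>set l. 0 < x" and sum: "sum_list l = m"
    using assms by (auto simp: partitions_def)
  show "set l \<subseteq> {1..m}" using pos sum member_le_sum_list by fastforce
  have "length l \<le> sum_list l" using pos by (induct l) auto
  then show "length l \<le> m" using sum by simp
qed

lemma finite_partitions: "finite (partitions m)"
proof (rule finite_subset)
  show "partitions m \<subseteq> {l. set l \<subseteq> {1..m} \<and> length l \<le> m}" using partitions_bound by blast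
qed (rule finite_lists_length_le, simp)

lemma partitions_0: "partitions 0 = {[]}"
  unfolding partitions_def
  by (auto simp: sum_list_eq_0_iff) (metis less_irrefl neq_Nil_conv list.set_intros(1))

lemma diagram_eq_UN: "diagram l = (\<Union>i<length l. {i} \<times> {..<l ! i})"
  unfolding diagram_def by auto

lemma finite_diagram: "finite (diagram l)"
  unfolding diagram_eq_UN by auto

lemma card_diagram: "card (diagram l) = sum_list l"
proof -
  have "card (diagram l) = (\<Sum>i<length l. card ({i} \<times> {..<l ! i}))"
    unfolding diagram_eq_UN by (rule card_UN_disjoint) auto
  also have "\<dots> = sum_list l" by (simp add: sum_list_sum_nth atLeast0LessThan)
  finally show ?thesis .
qed

lemma diagram_snoc: "diagram (ys @ [v]) = diagram ys \<union> {(length ys, j) | j. j < v}"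
  unfolding diagram_def by (auto simp: nth_append less_Suc_eq)

text \<open>Removing the last cell of the last row.\<close>
lemma ex_border_strip_partitions_Suc:
  assumes "lam \<in> partitions (Suc m)"
  shows "\<exists>nu. nu \<in> partitions m \<and> border_strip lam nu"
proof -
  have lam: "sorted_wrt (\<ge>) lam" "\<forall>x\<in>set lam. 0 < x" "sum_list lam = Suc m"
    using assms by (auto simp: partitions_def)
  then obtain ys v where ys_v: "lam = ys @ [v]" by (metis rev_exhaust sum_list.Nil nat.simps(3))
  have v: "1 \<le> v" using lam ys_v by auto
  have ys: "sorted_wrt (\<ge>) ys" "\<forall>x\<in>set ys. v \<le> x" "\<forall>x\<in>set ys. 0 < x"
    using lam ys_v by (auto simp: sorted_wrt_append)
  define nu where "nu = (if v = 1 then ys else ys @ [v - 1])"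
  have diagram_nu: "diagram nu = diagram ys \<union> {(length ys, j) | j. j < v - 1}"
    unfolding nu_def using diagram_snoc by auto
  have "nu \<in> partitions m"
    unfolding partitions_def nu_def using ys lam ys_v v by (auto simp: sorted_wrt_append)
  moreover have "diagram lam - diagram nu = {(length ys, v - 1)}"
    unfolding diagram_nu ys_v diagram_snoc using v by (auto simp: diagram_def)
  moreover have "diagram nu \<subseteq> diagram lam"
    unfolding diagram_nu ys_v diagram_snoc by auto
  moreover have "edge_connected {(length ys, v - 1)}"
    unfolding edge_connected_def by auto
  ultimately show ?thesis unfolding border_strip_def Let_def by (intro exI[of _ nu]) auto
qed

lemma strip_height_partitions_Suc:
  assumes "lam \<in> partitions (Suc m)" "nu \<in> partitions m" "border_strip lam nu"
  shows "strip_height lam nu = 0"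
proof -
  have "diagram nu \<subseteq> diagram lam" using assms(3) by (simp add: border_strip_def)
  then have "card (diagram lam - diagram nu) = 1"
    using assms(1,2) by (simp add: card_Diff_subset finite_diagram card_diagram partitions_def)
  then obtain c where "diagram lam - diagram nu = {c}" by (rule card_1_singletonE)
  then show ?thesis unfolding strip_height_def by simp
qed

text \<open>With single-cell strips all signs are +1, so dim lam counts standard Young tableaux.\<close>
lemma mn_char_replicate_1_pos: "lam \<in> partitions n \<Longrightarrow> 1 \<le> mn_char lam (replicate n 1)"
proof (induct n arbitrary: lam)
  case 0
  then show ?case by (simp add: partitions_0)
next
  case (Suc m)
  let ?T = "{nu. nu \<in> partitions m \<and> border_strip lam nu}"
  have "sum_list lam = Suc m" using Suc.prems by (simp add: partitions_def)
  then have "mn_char lam (replicate (Suc m) 1) =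
      (\<Sum>nu\<in>?T. (-1) ^ strip_height lam nu * mn_char nu (replicate m 1))"
    by simp
  also have "\<dots> = (\<Sum>nu\<in>?T. mn_char nu (replicate m 1))"
    using strip_height_partitions_Suc[OF Suc.prems] by (intro sum.cong) auto
  finally have "mn_char lam (replicate (Suc m) 1) = (\<Sum>nu\<in>?T. mn_char nu (replicate m 1))" .
  moreover have "(\<Sum>nu\<in>?T. 1) \<le> (\<Sum>nu\<in>?T. mn_char nu (replicate m 1))"
    using Suc.hyps by (intro sum_mono) auto
  moreover have "finite ?T" using finite_partitions[of m] by (rule rev_finite_subset) auto
  then have "1 \<le> card ?T"
    using ex_border_strip_partitions_Suc[OF Suc.prems] by (metis One_nat_def Suc_leI card_gt_0_iff empty_iff mem_Collect_eq)
  ultimately show ?case by simp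
qed

lemma dimY_pos:
  assumes "lam \<in> partitions n"
  shows "1 \<le> dimY lam"
proof -
  have "sum_list lam = n" using assms by (simp add: partitions_def)
  then show ?thesis unfolding dimY_def using mn_char_replicate_1_pos[OF assms] by simp
qed

lemma cycle_type_list_empty: "cycle_type_list n {#} = replicate n 1"
proof -
  have "sorted_list_of_multiset (mset (replicate n (1::nat))) = replicate n 1"
    by (metis sorted_list_of_multiset_mset sorted_replicate sorted_sort_id)
  then show ?thesis unfolding cycle_type_list_def by simp
qed

lemma M_id:
  assumes "set_pmf \<rho> \<subseteq> partitions n"
  shows "M \<rho> n id = 1"
proof -
  have "conj_to_Sn n id id" by (rule conj_to_Sn_self) (auto simp: finitary_def)
  then have "M \<rho> n id = M_type \<rho> n {#}" using M_eq_M_type cycle_lengths_id by metis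
  also have "\<dots> = (\<Sum>lam\<in>partitions n. pmf \<rho> lam)"
    unfolding M_type_def cycle_type_list_empty
  proof (rule sum.cong)
    fix lam assume lam: "lam \<in> partitions n"
    then have "mn_char lam (replicate n 1) = dimY lam" by (simp add: dimY_def partitions_def)
    then show "pmf \<rho> lam * real_of_int (mn_char lam (replicate n 1)) / real_of_int (dimY lam) =
        pmf \<rho> lam"
      using dimY_pos[OF lam] by simp
  qed simp
  also have "\<dots> = 1" using assms finite_partitions by (simp add: sum_pmf_eq_1)
  finally show ?thesis .
qed

lemma perm_of_type_cycle_lengths:
  assumes "finitary \<sigma>" "\<forall>k\<ge>2. count (cycle_lengths \<sigma>) k = Poly_Mapping.lookup \<alpha> k"
  shows "finitary (perm_of_type \<alpha>) \<and> cycle_lengths (perm_of_type \<alpha>) = cycle_lengths \<sigma>"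
proof -
  let ?P = "\<lambda>\<sigma>. finitary \<sigma> \<and> (\<forall>k\<ge>2. count (cycle_lengths \<sigma>) k = Poly_Mapping.lookup \<alpha> k)"
  have "?P (perm_of_type \<alpha>)" unfolding perm_of_type_def using assms by (intro someI[of ?P \<sigma>]) auto
  then have f: "finitary (perm_of_type \<alpha>)"
    and c: "\<forall>k\<ge>2. count (cycle_lengths (perm_of_type \<alpha>)) k = Poly_Mapping.lookup \<alpha> k"
    by auto
  have "count (cycle_lengths (perm_of_type \<alpha>)) k = count (cycle_lengths \<sigma>) k" for k
  proof (cases "2 \<le> k")
    case False
    then have "k \<notin># cycle_lengths (perm_of_type \<alpha>)" "k \<notin># cycle_lengths \<sigma>"
      using cycle_lengths_ge_2 f assms(1) by (auto simp: finitary_iff_permutation)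
    then show ?thesis by (simp add: not_in_iff)
  qed (use c assms(2) in simp)
  then show ?thesis using f by (simp add: multiset_eqI)
qed

lemma young_gf_0:
  assumes "set_pmf \<rho> \<subseteq> partitions n"
  shows "young_gf \<rho> n 0 = 1"
proof -
  have "finitary (perm_of_type 0) \<and> cycle_lengths (perm_of_type 0) = cycle_lengths id"
    by (rule perm_of_type_cycle_lengths) (auto simp: finitary_def cycle_lengths_id)
  then have "perm_of_type 0 = id" using cycle_lengths_eq_empty_imp_id cycle_lengths_id by metis
  then show ?thesis unfolding young_gf_def using M_id[OF assms] by simp
qed

section \<open>Formal power series in countably many variables\<close>

type_synonym monom = "nat \<Rightarrow>\<^sub>0 nat"

definition total_deg :: "monom \<Rightarrow> nat" where
  "total_deg \<alpha> = (\<Sum>k\<in>Poly_Mapping.keys \<alpha>. Poly_Mapping.lookup \<alpha> k)"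

definition splittings :: "monom \<Rightarrow> (monom \<times> monom) set" where
  "splittings \<alpha> = {(\<beta>, \<gamma>). \<beta> + \<gamma> = \<alpha>}"

definition mone :: mfps where
  "mone = (\<lambda>\<alpha>. if \<alpha> = 0 then 1 else 0)"

definition euler_op :: "mfps \<Rightarrow> mfps" where
  "euler_op F = (\<lambda>\<alpha>. real (total_deg \<alpha>) * F \<alpha>)"

lemma total_deg_superset:
  assumes "finite K" "Poly_Mapping.keys \<alpha> \<subseteq> K"
  shows "total_deg \<alpha> = (\<Sum>k\<in>K. Poly_Mapping.lookup \<alpha> k)"
  unfolding total_deg_def using assms by (intro sum.mono_neutral_left) (auto simp: in_keys_iff)

lemma total_deg_add: "total_deg (\<beta> + \<gamma>) = total_deg \<beta> + total_deg \<gamma>"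
proof -
  let ?K = "Poly_Mapping.keys \<beta> \<union> Poly_Mapping.keys \<gamma>"
  have keys: "Poly_Mapping.keys (\<beta> + \<gamma>) \<subseteq> ?K" by (rule keys_add)
  show ?thesis
    by (simp add: total_deg_superset[OF _ keys] total_deg_superset[of ?K] lookup_add sum.distrib)
qed

lemma total_deg_eq_0_iff: "total_deg \<alpha> = 0 \<longleftrightarrow> \<alpha> = 0"
  by (auto simp: total_deg_def in_keys_iff poly_mapping_eqI)

lemma total_deg_0 [simp]: "total_deg 0 = 0"
  by (simp add: total_deg_def)

lemma total_deg_single [simp]: "total_deg (Poly_Mapping.single k n) = n"
  by (simp add: total_deg_def)

lemma total_deg_eq_1_imp_single:
  assumes "total_deg \<gamma> = 1"
  obtains k where "\<gamma> = Poly_Mapping.single k 1"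
proof -
  obtain a where a: "a \<in> Poly_Mapping.keys \<gamma>" "Poly_Mapping.lookup \<gamma> a = 1"
    "\<forall>b\<in>Poly_Mapping.keys \<gamma>. b \<noteq> a \<longrightarrow> Poly_Mapping.lookup \<gamma> b = 0"
    using assms unfolding total_deg_def by (subst (asm) sum_eq_1_iff) auto
  then have "\<gamma> = Poly_Mapping.single a 1"
    by (intro poly_mapping_eqI) (auto simp: lookup_single in_keys_iff when_def)
  then show ?thesis by (rule that)
qed

lemma diff_single_add_single:
  "k \<in> Poly_Mapping.keys (\<beta>::monom) \<Longrightarrow> \<beta> - Poly_Mapping.single k 1 + Poly_Mapping.single k 1 = \<beta>"
  by (intro poly_mapping_eqI) (auto simp: lookup_add lookup_minus lookup_single in_keys_iff when_def)

lemma finite_splittings: "finite (splittings \<alpha>)"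
proof -
  let ?K = "Poly_Mapping.keys \<alpha>"
  let ?S = "{\<beta>::monom. \<forall>k. Poly_Mapping.lookup \<beta> k \<le> Poly_Mapping.lookup \<alpha> k}"
  let ?r = "\<lambda>\<beta>. restrict (Poly_Mapping.lookup \<beta>) ?K"
  have "?r ` ?S \<subseteq> PiE ?K (\<lambda>k. {0..Poly_Mapping.lookup \<alpha> k})" by auto
  then have "finite (?r ` ?S)" by (rule finite_subset) (intro finite_PiE, auto)
  moreover have "inj_on ?r ?S"
  proof
    fix \<beta> \<gamma> assume \<beta>: "\<beta> \<in> ?S" and \<gamma>: "\<gamma> \<in> ?S" and eq: "?r \<beta> = ?r \<gamma>"
    show "\<beta> = \<gamma>"
    proof (rule poly_mapping_eqI)
      fix k
      show "Poly_Mapping.lookup \<beta> k = Poly_Mapping.lookup \<gamma> k"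
      proof (cases "k \<in> ?K")
        case True
        then show ?thesis using fun_cong[OF eq, of k] by simp
      next
        case False
        then have "Poly_Mapping.lookup \<alpha> k = 0" by (simp add: in_keys_iff)
        then show ?thesis using \<beta> \<gamma> by (metis le_zero_eq mem_Collect_eq)
      qed
    qed
  qed
  ultimately have "finite ?S" by (rule finite_imageD)
  moreover have "splittings \<alpha> \<subseteq> (\<lambda>\<beta>. (\<beta>, \<alpha> - \<beta>)) ` ?S"
  proof
    fix p assume "p \<in> splittings \<alpha>"
    then obtain \<beta> \<gamma> where p: "p = (\<beta>, \<gamma>)" "\<beta> + \<gamma> = \<alpha>" unfolding splittings_def by auto
    then have "\<gamma> = \<alpha> - \<beta>" by (metis add_diff_cancel_left')
    moreover have "\<beta> \<in> ?S" using p by (auto simp: lookup_add)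
    ultimately show "p \<in> (\<lambda>\<beta>. (\<beta>, \<alpha> - \<beta>)) ` ?S" using p by auto
  qed
  ultimately show ?thesis by (meson finite_imageI finite_subset)
qed

lemma mmult_splittings: "mmult F G \<alpha> = (\<Sum>(\<beta>, \<gamma>)\<in>splittings \<alpha>. F \<beta> * G \<gamma>)"
  unfolding mmult_def splittings_def by simp

lemma total_deg_splittings:
  "(\<beta>, \<gamma>) \<in> splittings \<alpha> \<Longrightarrow> total_deg \<beta> \<le> total_deg \<alpha> \<and> total_deg \<gamma> \<le> total_deg \<alpha>"
  unfolding splittings_def using total_deg_add by force

lemma mmult_commute: "mmult F G \<alpha> = mmult G F \<alpha>"
  unfolding mmult_splittings
  by (rule sum.reindex_bij_witness[where i="\<lambda>(a, b). (b, a)" and j="\<lambda>(a, b). (b, a)"])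
     (auto simp: splittings_def add.commute)

lemma mmult_mone_right: "mmult F mone \<alpha> = F \<alpha>"
proof -
  have "mmult F mone \<alpha> = (\<Sum>p\<in>splittings \<alpha>. if p = (\<alpha>, 0) then F \<alpha> else 0)"
    unfolding mmult_splittings mone_def
    by (rule sum.cong) (auto simp: splittings_def split: if_splits)
  also have "\<dots> = F \<alpha>" using finite_splittings by (simp add: splittings_def)
  finally show ?thesis .
qed

lemma mmult_mone_left: "mmult mone F \<alpha> = F \<alpha>"
  using mmult_commute mmult_mone_right by metis

lemma mmult_assoc: "mmult (mmult F G) H \<alpha> = mmult F (mmult G H) \<alpha>"
proof -
  let ?T = "{(a, b, c). a + b + c = \<alpha>} :: (monom \<times> monom \<times> monom) set"
  have "mmult (mmult F G) H \<alpha> = (\<Sum>(d, c)\<in>splittings \<alpha>. \<Sum>(a, b)\<in>splittings d. F a * G b * H c)"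
    unfolding mmult_splittings by (simp add: sum_distrib_right case_prod_unfold)
  also have "\<dots> = (\<Sum>(p, q)\<in>Sigma (splittings \<alpha>) (\<lambda>p. splittings (fst p)).
      F (fst q) * G (snd q) * H (snd p))"
    by (subst sum.Sigma[symmetric]) (auto simp: finite_splittings case_prod_unfold)
  also have "\<dots> = (\<Sum>(a, b, c)\<in>?T. F a * G b * H c)"
    by (rule sum.reindex_bij_witness[where i="\<lambda>(a, b, c). ((a + b, c), (a, b))"
          and j="\<lambda>((d, c), (a, b)). (a, b, c)"]) (auto simp: splittings_def)
  also have "\<dots> = (\<Sum>(p, q)\<in>Sigma (splittings \<alpha>) (\<lambda>p. splittings (snd p)).
      F (fst p) * G (fst q) * H (snd q))"
    by (rule sum.reindex_bij_witness[where i="\<lambda>((a, e), (b, c)). (a, b, c)"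
          and j="\<lambda>(a, b, c). ((a, b + c), (b, c))"]) (auto simp: splittings_def add.assoc)
  also have "\<dots> = (\<Sum>(a, e)\<in>splittings \<alpha>. \<Sum>(b, c)\<in>splittings e. F a * G b * H c)"
    by (subst sum.Sigma[symmetric]) (auto simp: finite_splittings case_prod_unfold)
  also have "\<dots> = mmult F (mmult G H) \<alpha>"
    unfolding mmult_splittings by (simp add: sum_distrib_left case_prod_unfold mult.assoc)
  finally show ?thesis .
qed

lemma mmult_add_left: "mmult (\<lambda>\<beta>. P \<beta> + Q \<beta>) R \<alpha> = mmult P R \<alpha> + mmult Q R \<alpha>"
  unfolding mmult_splittings by (simp add: case_prod_unfold distrib_right sum.distrib)

lemma mmult_scale_right: "mmult F (\<lambda>\<beta>. c * P \<beta>) \<alpha> = c * mmult F P \<alpha>"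
  unfolding mmult_splittings by (simp add: case_prod_unfold sum_distrib_left mult_ac)

lemma mmult_sum_right: "mmult F (\<lambda>\<gamma>. \<Sum>m\<in>S. G m \<gamma>) \<alpha> = (\<Sum>m\<in>S. mmult F (G m) \<alpha>)"
  unfolding mmult_splittings by (simp add: case_prod_unfold sum_distrib_left sum.swap[of _ S])

lemma mmult_cong_right:
  assumes "\<And>\<gamma>. total_deg \<gamma> \<le> total_deg \<alpha> \<Longrightarrow> G \<gamma> = G' \<gamma>"
  shows "mmult F G \<alpha> = mmult F G' \<alpha>"
  unfolding mmult_splittings using assms total_deg_splittings by (intro sum.cong) auto

lemma euler_op_mmult: "euler_op (mmult F G) \<alpha> = mmult (euler_op F) G \<alpha> + mmult F (euler_op G) \<alpha>"
proof -
  have "euler_op (mmult F G) \<alpha> = (\<Sum>(\<beta>, \<gamma>)\<in>splittings \<alpha>. real (total_deg \<alpha>) * (F \<beta> * G \<gamma>))"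
    unfolding euler_op_def mmult_splittings by (simp add: sum_distrib_left case_prod_unfold)
  also have "\<dots> = (\<Sum>(\<beta>, \<gamma>)\<in>splittings \<alpha>.
      real (total_deg \<beta>) * F \<beta> * G \<gamma> + F \<beta> * (real (total_deg \<gamma>) * G \<gamma>))"
    by (rule sum.cong) (auto simp: splittings_def total_deg_add algebra_simps)
  also have "\<dots> = mmult (euler_op F) G \<alpha> + mmult F (euler_op G) \<alpha>"
    unfolding euler_op_def mmult_splittings by (simp add: case_prod_unfold sum.distrib)
  finally show ?thesis .
qed

lemma mpow_eq_0:
  assumes "G 0 = 0" "total_deg \<alpha> < j"
  shows "mpow G j \<alpha> = 0"
  using assms(2)
proof (induct j arbitrary: \<alpha>)
  case (Suc m)
  have "G \<beta> * mpow G m \<gamma> = 0" if split: "(\<beta>, \<gamma>) \<in> splittings \<alpha>" for \<beta> \<gamma>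
  proof (cases "\<beta> = 0")
    case False
    then have "total_deg \<beta> \<noteq> 0" by (simp add: total_deg_eq_0_iff)
    moreover have "total_deg \<alpha> = total_deg \<beta> + total_deg \<gamma>"
      using split by (auto simp: splittings_def total_deg_add)
    ultimately have "total_deg \<gamma> < m" using Suc.prems by linarith
    then show ?thesis using Suc.hyps by simp
  qed (simp add: assms(1))
  then show ?case by (auto simp: mmult_splittings intro!: sum.neutral)
qed simp

lemma euler_op_mpow:
  "euler_op (mpow G (Suc m)) \<alpha> = real (Suc m) * mmult (mpow G m) (euler_op G) \<alpha>"
proof (induct m arbitrary: \<alpha>)
  case 0
  show ?case by (simp add: euler_op_def mmult_mone_left mmult_mone_right flip: mone_def)
next
  case (Suc m)
  have "euler_op (mpow G (Suc (Suc m))) \<alpha> =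
      mmult (euler_op G) (mpow G (Suc m)) \<alpha> + mmult G (euler_op (mpow G (Suc m))) \<alpha>"
    by (simp add: euler_op_mmult)
  also have "mmult (euler_op G) (mpow G (Suc m)) \<alpha> = mmult (mpow G (Suc m)) (euler_op G) \<alpha>"
    by (rule mmult_commute)
  also have "mmult G (euler_op (mpow G (Suc m))) \<alpha> =
      real (Suc m) * mmult G (mmult (mpow G m) (euler_op G)) \<alpha>"
  proof -
    have "euler_op (mpow G (Suc m)) = (\<lambda>\<beta>. real (Suc m) * mmult (mpow G m) (euler_op G) \<beta>)"
      using Suc by (rule ext)
    then show ?thesis by (simp add: mmult_scale_right)
  qed
  also have "mmult G (mmult (mpow G m) (euler_op G)) \<alpha> = mmult (mpow G (Suc m)) (euler_op G) \<alpha>"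
    by (simp add: mmult_assoc)
  finally show ?case by (simp add: algebra_simps)
qed

lemma mlog_eq_finite_sum:
  assumes "\<gamma> \<noteq> 0" "total_deg \<gamma> < N"
  shows "mlog F \<gamma> = (\<Sum>m<N. (-1) ^ m / real (m + 1) *
      mpow (\<lambda>\<beta>. if \<beta> = 0 then 0 else F \<beta> / F 0) (m + 1) \<gamma>)"
proof -
  let ?G = "\<lambda>\<beta>. if \<beta> = 0 then 0 else F \<beta> / F 0"
  have "mlog F \<gamma> = suminf (\<lambda>m. (-1) ^ m / real (m + 1) * mpow ?G (m + 1) \<gamma>)"
    using assms(1) unfolding mlog_def Let_def by simp
  also have "\<dots> = (\<Sum>m<N. (-1) ^ m / real (m + 1) * mpow ?G (m + 1) \<gamma>)"
  proof (rule suminf_finite)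
    fix m assume "m \<notin> {..<N}"
    then have "mpow ?G (m + 1) \<gamma> = 0" using assms(2) by (intro mpow_eq_0) auto
    then show "(-1) ^ m / real (m + 1) * mpow ?G (m + 1) \<gamma> = 0" by simp
  qed simp
  finally show ?thesis .
qed

lemma euler_op_log_series:
  "euler_op (\<lambda>\<gamma>. \<Sum>m<N. (-1) ^ m / real (m + 1) * mpow G (m + 1) \<gamma>) \<alpha> =
    (\<Sum>m<N. (-1) ^ m * mmult (mpow G m) (euler_op G) \<alpha>)"
proof -
  have "euler_op (\<lambda>\<gamma>. \<Sum>m<N. (-1) ^ m / real (m + 1) * mpow G (m + 1) \<gamma>) \<alpha> =
      (\<Sum>m<N. (-1) ^ m / real (m + 1) * euler_op (mpow G (Suc m)) \<alpha>)"
    unfolding euler_op_def by (simp add: sum_distrib_left mult_ac)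
  also have "\<dots> = (\<Sum>m<N. (-1) ^ m * mmult (mpow G m) (euler_op G) \<alpha>)"
    unfolding euler_op_mpow by (intro sum.cong) (auto simp: field_simps)
  finally show ?thesis .
qed

text \<open>E F = F \<cdot> E (ln F): the coefficientwise form of the chain rule for the formal logarithm.\<close>
lemma euler_op_eq_mmult_euler_op_mlog:
  assumes F0: "F 0 = 1"
  shows "euler_op F \<alpha> = mmult F (euler_op (mlog F)) \<alpha>"
proof -
  define G where "G = (\<lambda>\<beta>. if \<beta> = 0 then 0 else F \<beta> / F 0)"
  define N where "N = Suc (total_deg \<alpha>)"
  define LN where "LN = (\<lambda>\<gamma>. \<Sum>m<N. (-1) ^ m / real (m + 1) * mpow G (m + 1) \<gamma>)"
  define X where "X = (\<lambda>m. mmult (mpow G m) (euler_op G) \<alpha>)"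
  have "euler_op (mlog F) \<gamma> = euler_op LN \<gamma>" if "total_deg \<gamma> \<le> total_deg \<alpha>" for \<gamma>
    using that mlog_eq_finite_sum[of \<gamma> N F]
    by (cases "\<gamma> = 0") (simp_all add: euler_op_def LN_def G_def N_def)
  then have "mmult F (euler_op (mlog F)) \<alpha> = mmult F (euler_op LN) \<alpha>"
    by (rule mmult_cong_right)
  also have "euler_op LN = (\<lambda>\<gamma>. \<Sum>m<N. (-1) ^ m * mmult (mpow G m) (euler_op G) \<gamma>)"
    unfolding LN_def by (rule ext) (rule euler_op_log_series)
  also have "mmult F (\<lambda>\<gamma>. \<Sum>m<N. (-1) ^ m * mmult (mpow G m) (euler_op G) \<gamma>) \<alpha> =
      (\<Sum>m<N. (-1) ^ m * mmult F (mmult (mpow G m) (euler_op G)) \<alpha>)"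
    by (simp add: mmult_sum_right mmult_scale_right)
  \<comment> \<open>F = 1 + G makes the alternating sum telescope.\<close>
  also have "\<dots> = (\<Sum>m<N. (-1) ^ m * (X m + X (Suc m)))"
  proof -
    have "F = (\<lambda>\<beta>. mone \<beta> + G \<beta>)" using F0 by (auto simp: mone_def G_def)
    then have "mmult F (mmult (mpow G m) (euler_op G)) \<alpha> = X m + X (Suc m)" for m
      unfolding X_def by (metis mmult_add_left mmult_assoc mmult_mone_left mpow.simps(2))
    then show ?thesis by simp
  qed
  also have "\<dots> = X 0 - (-1) ^ N * X N"
    by (induct N) (auto simp: algebra_simps)
  also have "X N = 0"
  proof -
    have "mpow G N \<beta> = 0" if "(\<beta>, \<gamma>) \<in> splittings \<alpha>" for \<beta> \<gamma>
      by (rule mpow_eq_0) (use total_deg_splittings[OF that] in \<open>auto simp: G_def N_def\<close>)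
    then show ?thesis unfolding X_def mmult_splittings by (auto intro!: sum.neutral)
  qed
  also have "X 0 = euler_op F \<alpha>"
    unfolding X_def using F0 by (simp add: mmult_mone_left euler_op_def G_def flip: mone_def)
  finally show ?thesis by simp
qed

section \<open>Convergence of the coefficients\<close>

definition exps_of_list :: "nat list \<Rightarrow> monom" where
  "exps_of_list ks = sum_list (map (\<lambda>k. Poly_Mapping.single k 1) ks)"

lemma mderivs_eq_scaled_coeff: "\<exists>C>0. \<forall>F. mderivs ks F \<beta> = C * F (\<beta> + exps_of_list ks)"
proof (induct ks arbitrary: \<beta>)
  case Nil
  show ?case by (intro exI[of _ 1]) (simp add: mderivs_def exps_of_list_def)
next
  case (Cons k ks)
  obtain C where C: "C > 0" "\<forall>F. mderivs ks F \<beta> = C * F (\<beta> + exps_of_list ks)"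
    using Cons by blast
  let ?C = "C * real (Poly_Mapping.lookup (\<beta> + exps_of_list ks) k + 1)"
  have "mderivs (k # ks) F \<beta> = ?C * F (\<beta> + exps_of_list (k # ks))" for F
  proof -
    have "mderivs (k # ks) F \<beta> = mderivs ks (mderiv k F) \<beta>" by (simp add: mderivs_def)
    also have "\<dots> = C * mderiv k F (\<beta> + exps_of_list ks)" using C by simp
    also have "\<dots> = ?C * F (\<beta> + exps_of_list (k # ks))"
      by (simp add: mderiv_def exps_of_list_def add_ac)
    finally show ?thesis .
  qed
  moreover have "?C > 0" using C by simp
  ultimately show ?case by blast
qed

lemma ex_exps_of_list:
  "Poly_Mapping.lookup \<gamma> 0 = 0 \<Longrightarrow>
    \<exists>ks. exps_of_list ks = \<gamma> \<and> length ks = total_deg \<gamma> \<and> (\<forall>k\<in>set ks. 1 \<le> k)"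
proof (induct "total_deg \<gamma>" arbitrary: \<gamma>)
  case 0
  then have "\<gamma> = 0" using total_deg_eq_0_iff by simp
  then show ?case by (intro exI[of _ "[]"]) (simp add: exps_of_list_def)
next
  case (Suc n)
  then have "\<gamma> \<noteq> 0" by auto
  then obtain k where k: "k \<in> Poly_Mapping.keys \<gamma>" by (metis all_not_in_conv keys_eq_empty)
  let ?\<gamma> = "\<gamma> - Poly_Mapping.single k 1"
  have \<gamma>: "?\<gamma> + Poly_Mapping.single k 1 = \<gamma>" using k by (rule diff_single_add_single)
  then have "total_deg ?\<gamma> = n"
    using Suc.hyps(2) total_deg_add[of ?\<gamma> "Poly_Mapping.single k 1"] by simp
  moreover have "Poly_Mapping.lookup ?\<gamma> 0 = 0" using Suc.prems by (simp add: lookup_minus)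
  ultimately obtain ks where ks: "exps_of_list ks = ?\<gamma>" "length ks = n" "\<forall>k\<in>set ks. 1 \<le> k"
    using Suc.hyps(1) by blast
  have "k \<noteq> 0" using k Suc.prems by (metis in_keys_iff)
  then show ?case using ks \<gamma> Suc.hyps(2)
    by (intro exI[of _ "k # ks"]) (auto simp: exps_of_list_def add.commute)
qed

definition lin_fps :: "(nat \<Rightarrow> real) \<Rightarrow> mfps" where
  "lin_fps c \<gamma> = (\<Sum>k\<in>Poly_Mapping.keys \<gamma>. if \<gamma> = Poly_Mapping.single k 1 then c k else 0)"

lemma lin_fps_single [simp]: "lin_fps c (Poly_Mapping.single k n) = (if n = 1 then c k else 0)"
  by (simp add: lin_fps_def inj_eq)

lemma lin_fps_eq_0: "total_deg \<gamma> \<noteq> 1 \<Longrightarrow> lin_fps c \<gamma> = 0"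
  unfolding lin_fps_def by (intro sum.neutral) auto

lemma tendsto_total_deg_mlog_young_gf:
  assumes LLN: "LLN_appropriate \<rho> c" and \<gamma>: "\<gamma> \<noteq> 0" "Poly_Mapping.lookup \<gamma> 0 = 0"
  shows "(\<lambda>n. real (total_deg \<gamma>) * mlog (young_gf (\<rho> n) n) \<gamma>) \<longlonglongrightarrow> lin_fps c \<gamma>"
proof (cases "total_deg \<gamma> = 1")
  case True
  then obtain k where k: "\<gamma> = Poly_Mapping.single k 1" by (rule total_deg_eq_1_imp_single)
  then have "k \<noteq> 0" using \<gamma> by (auto simp: lookup_single when_def split: if_splits)
  then have "(\<lambda>n. mderivs [k] (mlog (young_gf (\<rho> n) n)) 0) \<longlonglongrightarrow> c k"
    using LLN unfolding LLN_appropriate_def by simp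
  moreover have "mderivs [k] F 0 = F \<gamma>" for F by (simp add: mderivs_def mderiv_def k)
  ultimately show ?thesis using True k by simp
next
  case False
  then have "2 \<le> total_deg \<gamma>" using \<gamma> total_deg_eq_0_iff by (metis One_nat_def less_2_cases not_less)
  obtain ks where ks: "exps_of_list ks = \<gamma>" "length ks = total_deg \<gamma>" "\<forall>k\<in>set ks. 1 \<le> k"
    using ex_exps_of_list \<gamma>(2) by blast
  obtain C where C: "C > 0" "\<forall>F. mderivs ks F 0 = C * F (0 + exps_of_list ks)"
    using mderivs_eq_scaled_coeff by blast
  have "(\<lambda>n. mderivs ks (mlog (young_gf (\<rho> n) n)) 0) \<longlonglongrightarrow> 0"
    using LLN ks \<open>2 \<le> total_deg \<gamma>\<close> unfolding LLN_appropriate_def by simp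
  then have "(\<lambda>n. C * mlog (young_gf (\<rho> n) n) \<gamma>) \<longlonglongrightarrow> 0" using C ks by simp
  then have "(\<lambda>n. real (total_deg \<gamma>) / C * (C * mlog (young_gf (\<rho> n) n) \<gamma>)) \<longlonglongrightarrow> 0"
    by (rule tendsto_mult_right_zero)
  then show ?thesis using C lin_fps_eq_0[OF False] by simp
qed

definition exp_lin_fps :: "(nat \<Rightarrow> real) \<Rightarrow> mfps" where
  "exp_lin_fps c \<beta> = (\<Prod>k\<in>Poly_Mapping.keys \<beta>.
      c k ^ Poly_Mapping.lookup \<beta> k / fact (Poly_Mapping.lookup \<beta> k))"

lemma exp_lin_fps_superset:
  assumes "finite K" "Poly_Mapping.keys \<beta> \<subseteq> K"
  shows "exp_lin_fps c \<beta> =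
    (\<Prod>k\<in>K. c k ^ Poly_Mapping.lookup \<beta> k / fact (Poly_Mapping.lookup \<beta> k))"
  unfolding exp_lin_fps_def using assms by (intro prod.mono_neutral_left) (auto simp: in_keys_iff)

lemma exp_lin_fps_diff_single:
  assumes k: "k \<in> Poly_Mapping.keys \<beta>"
  shows "exp_lin_fps c (\<beta> - Poly_Mapping.single k 1) * c k =
    real (Poly_Mapping.lookup \<beta> k) * exp_lin_fps c \<beta>"
proof -
  let ?K = "Poly_Mapping.keys \<beta>"
  let ?b = "\<beta> - Poly_Mapping.single k 1"
  define f where "f = (\<lambda>j. c j ^ Poly_Mapping.lookup \<beta> j / fact (Poly_Mapping.lookup \<beta> j))"
  define g where "g = (\<lambda>j. c j ^ Poly_Mapping.lookup ?b j / fact (Poly_Mapping.lookup ?b j))"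
  have lookup_b: "Poly_Mapping.lookup ?b j =
      (if j = k then Poly_Mapping.lookup \<beta> k - 1 else Poly_Mapping.lookup \<beta> j)" for j
    by (simp add: lookup_minus lookup_single when_def)
  have "Poly_Mapping.keys ?b \<subseteq> ?K"
  proof
    fix j assume "j \<in> Poly_Mapping.keys ?b"
    then have "Poly_Mapping.lookup ?b j \<noteq> 0" by (simp add: in_keys_iff)
    then show "j \<in> ?K" using lookup_b[of j] k by (auto simp: in_keys_iff split: if_splits)
  qed
  then have "exp_lin_fps c ?b = g k * (\<Prod>j\<in>?K - {k}. g j)"
    unfolding g_def by (simp add: exp_lin_fps_superset[of ?K] prod.remove[OF _ k])
  also have "(\<Prod>j\<in>?K - {k}. g j) = (\<Prod>j\<in>?K - {k}. f j)"
    by (intro prod.cong) (auto simp: f_def g_def lookup_b[simplified])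
  finally have b: "exp_lin_fps c ?b = g k * (\<Prod>j\<in>?K - {k}. f j)" .
  have \<beta>: "exp_lin_fps c \<beta> = f k * (\<Prod>j\<in>?K - {k}. f j)"
    unfolding f_def exp_lin_fps_def by (simp add: prod.remove[OF _ k])
  obtain m where m: "Poly_Mapping.lookup \<beta> k = Suc m" using k by (metis in_keys_iff not0_implies_Suc)
  have "g k * c k = real (Suc m) * f k" unfolding f_def g_def lookup_b using m by simp
  then show ?thesis using b \<beta> m by (simp add: mult_ac)
qed

lemma mmult_lin_fps_right:
  "mmult F (lin_fps c) \<beta> = (\<Sum>k\<in>Poly_Mapping.keys \<beta>. F (\<beta> - Poly_Mapping.single k 1) * c k)"
proof -
  let ?h = "\<lambda>p. F (fst p) * lin_fps c (snd p)"
  let ?i = "\<lambda>k. (\<beta> - Poly_Mapping.single k 1, Poly_Mapping.single k (1::nat))"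
  let ?K = "Poly_Mapping.keys \<beta>"
  have "mmult F (lin_fps c) \<beta> = (\<Sum>p\<in>?i ` ?K. ?h p)"
    unfolding mmult_splittings case_prod_unfold
  proof (rule sum.mono_neutral_right[OF finite_splittings])
    show "?i ` ?K \<subseteq> splittings \<beta>"
      using diff_single_add_single by (auto simp: splittings_def)
    show "\<forall>p\<in>splittings \<beta> - ?i ` ?K. ?h p = 0"
    proof
      fix p assume p: "p \<in> splittings \<beta> - ?i ` ?K"
      obtain b g where bg: "p = (b, g)" "b + g = \<beta>" using p by (auto simp: splittings_def)
      show "?h p = 0"
      proof (cases "total_deg g = 1")
        case True
        then obtain k where k: "g = Poly_Mapping.single k 1" by (rule total_deg_eq_1_imp_single)
        then have "k \<in> ?K" using bg(2) by (auto simp: in_keys_iff lookup_add)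
        moreover have "b = \<beta> - Poly_Mapping.single k 1" using bg k by (metis add_diff_cancel_right')
        ultimately show ?thesis using p bg k by auto
      qed (simp add: bg lin_fps_eq_0)
    qed
  qed
  also have "\<dots> = (\<Sum>k\<in>?K. ?h (?i k))"
  proof -
    have "inj_on ?i ?K"
    proof (rule inj_onI)
      fix x y assume "?i x = ?i y"
      then have "Poly_Mapping.lookup (Poly_Mapping.single x (1::nat)) y = 1" by simp
      then show "x = y" by (simp add: lookup_single when_def split: if_splits)
    qed
    then show ?thesis using sum.reindex[of ?i ?K ?h] by (simp add: o_def)
  qed
  finally show ?thesis by simp
qed

lemma mmult_exp_lin_fps_lin_fps:
  "mmult (exp_lin_fps c) (lin_fps c) \<beta> = real (total_deg \<beta>) * exp_lin_fps c \<beta>"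
proof -
  have "mmult (exp_lin_fps c) (lin_fps c) \<beta> =
      (\<Sum>k\<in>Poly_Mapping.keys \<beta>. real (Poly_Mapping.lookup \<beta> k) * exp_lin_fps c \<beta>)"
    unfolding mmult_lin_fps_right by (rule sum.cong[OF refl exp_lin_fps_diff_single])
  then show ?thesis by (simp add: total_deg_def sum_distrib_right)
qed

lemma tendsto_young_gf_exp_lin_fps:
  assumes P: "\<forall>n. set_pmf (\<rho> n) \<subseteq> partitions n" and LLN: "LLN_appropriate \<rho> c"
    and "Poly_Mapping.lookup \<beta> 0 = 0"
  shows "(\<lambda>n. young_gf (\<rho> n) n \<beta>) \<longlonglongrightarrow> exp_lin_fps c \<beta>"
  using assms(3)
proof (induct "total_deg \<beta>" arbitrary: \<beta> rule: less_induct)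
  case less
  let ?F = "\<lambda>n. young_gf (\<rho> n) n"
  have F0: "?F n 0 = 1" for n using young_gf_0 P by blast
  show ?case
  proof (cases "\<beta> = 0")
    case True
    then show ?thesis using F0 by (simp add: exp_lin_fps_def)
  next
    case False
    have term_lim: "(\<lambda>n. ?F n b * (real (total_deg g) * mlog (?F n) g)) \<longlonglongrightarrow>
        exp_lin_fps c b * lin_fps c g" if bg: "(b, g) \<in> splittings \<beta>" for b g
    proof (cases "g = 0")
      case False
      have "b + g = \<beta>" using bg by (simp add: splittings_def)
      moreover have "total_deg g \<noteq> 0" using False by (simp add: total_deg_eq_0_iff)
      ultimately have "total_deg b < total_deg \<beta>"
        and "Poly_Mapping.lookup b 0 = 0" "Poly_Mapping.lookup g 0 = 0"
        using less.prems by (auto simp: total_deg_add lookup_add)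
      then show ?thesis
        using less.hyps tendsto_total_deg_mlog_young_gf[OF LLN False] by (auto intro: tendsto_mult)
    qed (simp add: lin_fps_eq_0)
    have "(\<lambda>n. mmult (?F n) (euler_op (mlog (?F n))) \<beta>) \<longlonglongrightarrow> mmult (exp_lin_fps c) (lin_fps c) \<beta>"
      unfolding mmult_splittings euler_op_def case_prod_unfold
      using term_lim by (auto intro!: tendsto_sum)
    moreover have "mmult (?F n) (euler_op (mlog (?F n))) \<beta> = real (total_deg \<beta>) * ?F n \<beta>" for n
      using euler_op_eq_mmult_euler_op_mlog[of "?F n" \<beta>] F0 by (simp add: euler_op_def)
    ultimately have "(\<lambda>n. real (total_deg \<beta>) * ?F n \<beta>) \<longlonglongrightarrow> real (total_deg \<beta>) * exp_lin_fps c \<beta>"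
      by (simp add: mmult_exp_lin_fps_lin_fps)
    moreover have "total_deg \<beta> \<noteq> 0" using False by (simp add: total_deg_eq_0_iff)
    ultimately show ?thesis by simp
  qed
qed

section \<open>The limit of the normalised character values\<close>

definition exps_of_mset :: "nat multiset \<Rightarrow> monom" where
  "exps_of_mset lam = Abs_poly_mapping (count lam)"

lemma lookup_exps_of_mset [simp]: "Poly_Mapping.lookup (exps_of_mset lam) = count lam"
  unfolding exps_of_mset_def by (simp add: count_eq_zero_iff)

lemma keys_exps_of_mset [simp]: "Poly_Mapping.keys (exps_of_mset lam) = set_mset lam"
  by (auto simp: in_keys_iff count_eq_zero_iff)

lemma count_cycle_lengths_0: "permutation f \<Longrightarrow> count (cycle_lengths f) 0 = 0"
  using cycle_lengths_ge_2 by (metis count_eq_zero_iff not_numeral_le_zero)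

lemma young_gf_exps_of_cycle_lengths:
  assumes "finitary \<sigma>" and lam: "lam = cycle_lengths \<sigma>"
  shows "\<forall>\<^sub>F n in sequentially. young_gf (\<rho> n) n (exps_of_mset lam) =
    sqrt (real n) ^ transp_length \<sigma> * M (\<rho> n) n \<sigma> / (\<Prod>k\<in>set_mset lam. fact (count lam k))"
proof -
  have \<sigma>: "permutation \<sigma>" using assms(1) by (simp add: finitary_iff_permutation)
  let ?\<tau> = "perm_of_type (exps_of_mset lam)"
  have \<tau>: "finitary ?\<tau>" "cycle_lengths ?\<tau> = lam"
    using perm_of_type_cycle_lengths[OF assms(1)] by (auto simp: lam)
  have M_eq: "\<forall>\<^sub>F n in sequentially. M (\<rho> n) n ?\<tau> = M (\<rho> n) n \<sigma>"
    using eventually_conj[OF eventually_M_eq_M_type[OF assms(1)] eventually_M_eq_M_type[OF \<tau>(1)]]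
    by (rule eventually_mono) (simp add: \<tau>(2) lam[symmetric])
  have power_eq: "sqrt (real n) ^ transp_length \<sigma> =
      (\<Prod>k\<in>set_mset lam. sqrt (real n) ^ (count lam k * (k - 1)))" for n
  proof -
    have "sqrt (real n) ^ transp_length \<sigma> = (\<Prod>i\<in>#lam. sqrt (real n) ^ (i - 1))"
      unfolding transp_length_eq_cycle_defect[OF \<sigma>] cycle_defect_def lam[symmetric]
      by (induct lam) (simp_all add: power_add)
    also have "\<dots> = (\<Prod>k\<in>set_mset lam. (sqrt (real n) ^ (k - 1)) ^ count lam k)"
      by (rule image_prod_mset_multiplicity)
    finally show ?thesis by (simp add: power_mult[symmetric] mult.commute)
  qed
  have lam_0: "count lam 0 = 0" using count_cycle_lengths_0[OF \<sigma>] by (simp add: lam)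
  show ?thesis using M_eq
    by (rule eventually_mono) (simp add: young_gf_def prod_dividef power_eq lam_0 mult.commute)
qed

lemma exp_lin_fps_exps_of_mset:
  "exp_lin_fps c (exps_of_mset lam) = (\<Prod>i\<in>#lam. c i) / (\<Prod>k\<in>set_mset lam. fact (count lam k))"
  unfolding exp_lin_fps_def by (simp add: prod_dividef image_prod_mset_multiplicity)

theorem mainTheorem12:
  fixes \<rho> :: "nat \<Rightarrow> nat list pmf" and c :: "nat \<Rightarrow> real"
    and \<sigma> :: "nat \<Rightarrow> nat" and lam :: "nat multiset"
  assumes "\<forall>n. set_pmf (\<rho> n) \<subseteq> partitions n"
    and "LLN_appropriate \<rho> c"
    and "finitary \<sigma>"
    and "lam = cycle_lengths \<sigma>"
  shows "(\<lambda>n. sqrt (real n) ^ transp_length \<sigma> * M (\<rho> n) n \<sigma>) \<longlonglongrightarrow> (\<Prod>i\<in>#lam. c i)"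
proof -
  define PF where "PF = (\<Prod>k\<in>set_mset lam. fact (count lam k) :: real)"
  have "PF \<noteq> 0" by (simp add: PF_def)
  have "count lam 0 = 0"
    using assms(3,4) count_cycle_lengths_0 by (simp add: finitary_iff_permutation)
  then have "(\<lambda>n. young_gf (\<rho> n) n (exps_of_mset lam)) \<longlonglongrightarrow> (\<Prod>i\<in>#lam. c i) / PF"
    using tendsto_young_gf_exp_lin_fps[OF assms(1,2), of "exps_of_mset lam"]
    by (simp add: exp_lin_fps_exps_of_mset PF_def)
  then have "(\<lambda>n. PF * young_gf (\<rho> n) n (exps_of_mset lam)) \<longlonglongrightarrow> (\<Prod>i\<in>#lam. c i)"
    using \<open>PF \<noteq> 0\<close> by (auto dest: tendsto_mult_left[of _ _ _ PF])
  moreover have "\<forall>\<^sub>F n in sequentially.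
      PF * young_gf (\<rho> n) n (exps_of_mset lam) = sqrt (real n) ^ transp_length \<sigma> * M (\<rho> n) n \<sigma>"
    using young_gf_exps_of_cycle_lengths[OF assms(3,4), of \<rho>]
    by (rule eventually_mono) (use \<open>PF \<noteq> 0\<close> in \<open>simp add: PF_def[symmetric]\<close>)
  ultimately show ?thesis by (rule Lim_transform_eventually)
qed

end
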